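(* Let $\eta_1,\eta_2,\dots\in\mathcal P(U)$, set $\eta(k):=\eta_1\wedge\eta_2\wedge\cdots\wedge\eta_k$ (products taken left to right), $g_{s,j}:=\mathbb I_{p_s}+\eta_j^{s,0}$ for $j\ge1$, $g_{s,0}:=\mathbb I_{p_s}$ and $g_s(k):=g_{s,0}g_{s,1}\cdots g_{s,k}$. Then for every integer $k\ge1$ and every $t\ge1$, $$\eta(k)^{s,t}=\Big(\sum_{\tau\in\Delta_t}\ \sum_{J\in J_k(\rho(\tau))}\ \bigwedge_{r=1}^{\rho(\tau)}\ g_{s+\sigma'(\tau,r)}(j_r-1)\cdot\eta_{j_r}^{\,s+\sigma(\tau,r),\ \tau_{\rho(\tau)+1-r}}\cdot g_{s+\sigma(\tau,r)}(j_r)^{-1}\Big)\cdot g_s(k),$$ where the wedge product over $r$ is taken in increasing order of $r$ from left to right, and the inner sum is empty when $k<\rho(\tau)$.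
   Context: $\mathcal P(U)$ is the set of families $\eta=(\eta^{s,k})_{0\le s\le m,0\le k\le m-s}$, $\eta^{s,k}$ a $p_{s+k}\times p_s$ matrix of smooth $(0,k)$-forms on $U$, with $\mathbb I_{p_s}+\eta^{s,0}$ invertible; semigroup law $(\eta_1\wedge\eta_2)^{s,k}=\eta_1^{s,k}+\eta_2^{s,k}+\sum_{j=0}^k\eta_1^{s+j,k-j}\wedge\eta_2^{s,j}$ (matrix products with wedge of entries). Conventions: components with indices outside the range are $0$. $\Delta_t:=\{\tau\in\mathbb N^t:\tau_j\neq0\Rightarrow\tau_{j-1}\neq0,\ \sum_{j=1}^t\tau_j=t\}$; $\rho(\tau):=\max\{j:\tau_j\neq0\}$; $J_k(\rho):=\{J=(j_1,\dots,j_\rho)\in\{1,\dots,k\}^\rho:j_1<\dots<j_\rho\}$; $\sigma'(\tau,r):=\sum_{j=1}^{\rho(\tau)+1-r}\tau_j$ and $\sigma(\tau,r):=\sum_{j=1}^{\rho(\tau)-r}\tau_j$. *)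

theory Defs
  imports "HOL-Analysis.Analysis"
begin

fun Ck_on :: "nat \<Rightarrow> 'a::real_normed_vector set \<Rightarrow> ('a \<Rightarrow> 'b::real_normed_vector) \<Rightarrow> bool" where
  "Ck_on 0 U f = continuous_on U f"
| "Ck_on (Suc k) U f =
     (\<exists>f'. (\<forall>x\<in>U. (f has_derivative f' x) (at x)) \<and> (\<forall>v. Ck_on k U (\<lambda>x. f' x v)))"

definition Cinf_on :: "'a::real_normed_vector set \<Rightarrow> ('a \<Rightarrow> 'b::real_normed_vector) \<Rightarrow> bool" where
  "Cinf_on U f \<longleftrightarrow> (\<forall>k. Ck_on k U f)"

section \<open>Pointwise (0,*)-forms: elements of the exterior algebra on d-zbar_i, i :: 'n\<close>

text \<open>An element is given by its coefficients: coefficient of d-zbar_I for I a set of indices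
  (taken in increasing order).\<close>

type_synonym 'n ext = "'n set \<Rightarrow> complex"

definition ezero :: "'n ext" where "ezero = (\<lambda>_. 0)"
definition eunit :: "'n ext" where "eunit = (\<lambda>K. if K = {} then 1 else 0)"

definition wsign :: "'n::linorder set \<Rightarrow> 'n set \<Rightarrow> complex" where
  "wsign I J = (-1) ^ card {(i, j). i \<in> I \<and> j \<in> J \<and> j < i}"

definition wedge :: "'n::{finite,linorder} ext \<Rightarrow> 'n ext \<Rightarrow> 'n ext" where
  "wedge \<alpha> \<beta> = (\<lambda>K. \<Sum>I\<in>Pow K. wsign I (K - I) * \<alpha> I * \<beta> (K - I))"

type_synonym 'n fmat = "nat \<Rightarrow> nat \<Rightarrow> 'n ext"

definition idm :: "nat \<Rightarrow> 'n fmat" where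
  "idm q = (\<lambda>i j. if i = j \<and> i < q then eunit else ezero)"

definition madd :: "'n fmat \<Rightarrow> 'n fmat \<Rightarrow> 'n fmat" where
  "madd A B = (\<lambda>i j K. A i j K + B i j K)"

definition mmul :: "nat \<Rightarrow> 'n::{finite,linorder} fmat \<Rightarrow> 'n fmat \<Rightarrow> 'n fmat" where
  "mmul q A B = (\<lambda>i j. (\<lambda>K. \<Sum>l<q. wedge (A i l) (B l j) K))"

definition minv :: "nat \<Rightarrow> 'n::{finite,linorder} fmat \<Rightarrow> 'n fmat" where
  "minv q A = (SOME B. (\<forall>i j. (q \<le> i \<or> q \<le> j) \<longrightarrow> B i j = ezero)
                 \<and> mmul q A B = idm q \<and> mmul q B A = idm q)"

text \<open>Ordered product F 1 * F 2 * ... * F n, where d r is the inner dimension between F r and F (r+1).\<close>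
definition mchain :: "(nat \<Rightarrow> nat) \<Rightarrow> (nat \<Rightarrow> 'n::{finite,linorder} fmat) \<Rightarrow> nat \<Rightarrow> 'n fmat" where
  "mchain d F n = foldl (\<lambda>A r. mmul (d (r - 1)) A (F r)) (F 1) [2..<Suc n]"

text \<open>A family: eta s k x is the matrix eta^{s,k} at the point x (entries i < p(s+k), j < p s).\<close>
type_synonym ('x, 'n) fam = "nat \<Rightarrow> nat \<Rightarrow> 'x \<Rightarrow> 'n fmat"

definition inP :: "nat \<Rightarrow> (nat \<Rightarrow> nat) \<Rightarrow> ((complex, 'n::{finite,linorder}) vec) set
                   \<Rightarrow> ((complex, 'n) vec, 'n) fam \<Rightarrow> bool" where
  "inP m p U \<eta> \<longleftrightarrow>
     \<comment> \<open>components with indices outside the range are zero\<close>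
     (\<forall>s k x. \<not> (s \<le> m \<and> k \<le> m - s) \<longrightarrow> \<eta> s k x = (\<lambda>i j. ezero))
   \<and> (\<forall>s k. s \<le> m \<and> k \<le> m - s \<longrightarrow>
        \<comment> \<open>matrix of size p(s+k) x p s\<close>
        (\<forall>x i j. (p (s + k) \<le> i \<or> p s \<le> j) \<longrightarrow> \<eta> s k x i j = ezero)
        \<comment> \<open>entries are smooth (0,k)-forms on U\<close>
      \<and> (\<forall>i j K. Cinf_on U (\<lambda>x. \<eta> s k x i j K))
      \<and> (\<forall>x\<in>U. \<forall>i j K. card K \<noteq> k \<longrightarrow> \<eta> s k x i j K = 0))
   \<and> (\<forall>s. s \<le> m \<longrightarrow>
        \<comment> \<open>I + eta^{s,0} is invertible as a matrix of smooth functions on U\<close>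
        (\<exists>B :: (complex, 'n) vec \<Rightarrow> 'n fmat.
            (\<forall>i j K. Cinf_on U (\<lambda>x. B x i j K))
          \<and> (\<forall>x i j K. K \<noteq> {} \<longrightarrow> B x i j K = 0)
          \<and> (\<forall>x i j. (p s \<le> i \<or> p s \<le> j) \<longrightarrow> B x i j = ezero)
          \<and> (\<forall>x\<in>U. mmul (p s) (madd (idm (p s)) (\<eta> s 0 x)) (B x) = idm (p s)
                  \<and> mmul (p s) (B x) (madd (idm (p s)) (\<eta> s 0 x)) = idm (p s))))"

definition fwedge :: "(nat \<Rightarrow> nat) \<Rightarrow> ('x, 'n::{finite,linorder}) fam \<Rightarrow> ('x, 'n) fam \<Rightarrow> ('x, 'n) fam" where
  "fwedge p \<eta>1 \<eta>2 = (\<lambda>s k x i j K.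
      \<eta>1 s k x i j K + \<eta>2 s k x i j K
      + (\<Sum>l\<le>k. mmul (p (s + l)) (\<eta>1 (s + l) (k - l) x) (\<eta>2 s l x) i j K))"

definition etaK :: "(nat \<Rightarrow> nat) \<Rightarrow> (nat \<Rightarrow> ('x, 'n::{finite,linorder}) fam) \<Rightarrow> nat \<Rightarrow> ('x, 'n) fam" where
  "etaK p \<eta> k = foldl (fwedge p) (\<eta> 1) (map \<eta> [2..<Suc k])"

definition gsj :: "(nat \<Rightarrow> nat) \<Rightarrow> (nat \<Rightarrow> ('x, 'n::{finite,linorder}) fam) \<Rightarrow> nat \<Rightarrow> nat \<Rightarrow> 'x \<Rightarrow> 'n fmat" where
  "gsj p \<eta> s j x = (if j = 0 then idm (p s) else madd (idm (p s)) (\<eta> j s 0 x))"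

definition gs :: "(nat \<Rightarrow> nat) \<Rightarrow> (nat \<Rightarrow> ('x, 'n::{finite,linorder}) fam) \<Rightarrow> nat \<Rightarrow> nat \<Rightarrow> 'x \<Rightarrow> 'n fmat" where
  "gs p \<eta> s k x = foldl (\<lambda>A j. mmul (p s) A (gsj p \<eta> s j x)) (gsj p \<eta> s 0 x) [1..<Suc k]"

text \<open>tau in N^t is represented as a function nat => nat, with tau_j at index j (1 <= j <= t)
  and value 0 at all other indices.\<close>
definition Delta :: "nat \<Rightarrow> (nat \<Rightarrow> nat) set" where
  "Delta t = {\<tau>. \<tau> 0 = 0 \<and> (\<forall>j>t. \<tau> j = 0)
              \<and> (\<forall>j\<in>{2..t}. \<tau> j \<noteq> 0 \<longrightarrow> \<tau> (j - 1) \<noteq> 0)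
              \<and> (\<Sum>j=1..t. \<tau> j) = t}"

definition rho :: "(nat \<Rightarrow> nat) \<Rightarrow> nat" where
  "rho \<tau> = Max {j. \<tau> j \<noteq> 0}"

text \<open>J = (j_1 < ... < j_rho) in {1..k}^rho, represented as a function with J r = j_r for
  1 <= r <= rho and 0 elsewhere.\<close>
definition Jset :: "nat \<Rightarrow> nat \<Rightarrow> (nat \<Rightarrow> nat) set" where
  "Jset k \<rho> = {J. (\<forall>r. (r = 0 \<or> \<rho> < r) \<longrightarrow> J r = 0)
               \<and> (\<forall>r\<in>{1..\<rho>}. 1 \<le> J r \<and> J r \<le> k)
               \<and> (\<forall>r\<in>{1..<\<rho>}. J r < J (Suc r))}"

definition sigma' :: "(nat \<Rightarrow> nat) \<Rightarrow> nat \<Rightarrow> nat" where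
  "sigma' \<tau> r = (\<Sum>j=1..rho \<tau> + 1 - r. \<tau> j)"

definition sigma :: "(nat \<Rightarrow> nat) \<Rightarrow> nat \<Rightarrow> nat" where
  "sigma \<tau> r = (\<Sum>j=1..rho \<tau> - r. \<tau> j)"

definition factor :: "(nat \<Rightarrow> nat) \<Rightarrow> (nat \<Rightarrow> ('x, 'n::{finite,linorder}) fam)
                     \<Rightarrow> nat \<Rightarrow> (nat \<Rightarrow> nat) \<Rightarrow> (nat \<Rightarrow> nat) \<Rightarrow> 'x \<Rightarrow> nat \<Rightarrow> 'n fmat" where
  "factor p \<eta> s \<tau> J x r =
     mmul (p (s + sigma \<tau> r))
       (mmul (p (s + sigma' \<tau> r))
          (gs p \<eta> (s + sigma' \<tau> r) (J r - 1) x)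
          (\<eta> (J r) (s + sigma \<tau> r) (\<tau> (rho \<tau> + 1 - r)) x))
       (minv (p (s + sigma \<tau> r)) (gs p \<eta> (s + sigma \<tau> r) (J r) x))"

definition rhs :: "(nat \<Rightarrow> nat) \<Rightarrow> (nat \<Rightarrow> ('x, 'n::{finite,linorder}) fam)
                  \<Rightarrow> nat \<Rightarrow> nat \<Rightarrow> nat \<Rightarrow> 'x \<Rightarrow> 'n fmat" where
  "rhs p \<eta> k s t x =
     mmul (p s)
       (\<lambda>i j K. \<Sum>\<tau>\<in>Delta t. \<Sum>J\<in>Jset k (rho \<tau>).
           mchain (\<lambda>r. p (s + sigma \<tau> r)) (factor p \<eta> s \<tau> J x) (rho \<tau>) i j K)
       (gs p \<eta> s k x)"

end

theory Submission
  imports Defs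
begin

text \<open>
  Induction on k, starting from eta(0) = 0, the neutral element of the semigroup law.
  Write E = eta(k), N = eta_(k+1) and g_s = g_s(k). The law gives I + E^(s,0) = g_s and, for t >= 1,

    eta(k+1)^(s,t) = E^(s,t) (I + N^(s,0)) + (I + E^(s+t,0)) N^(s,t) + sum_(0<l<t) E^(s+l,t-l) N^(s,l).

  Let S_k^(s,t) be the double sum over tau and J, and L_l = g_(s+l) N^(s,l) g_s(k+1)^(-1).
  Inserting the induction hypothesis E^(s,t) = S_k^(s,t) g_s and g_s(k+1) = g_s (I + N^(s,0))
  turns the right-hand side into (S_k^(s,t) + L_t + sum_(0<l<t) S_k^(s+l,t-l) L_l) g_s(k+1).
  The bracket is S_(k+1)^(s,t): its terms with j_rho <= k make up S_k^(s,t); in the others the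
  last factor is L_l with l = tau_1, and deleting the first part of the composition tau leaves
  either nothing (tau = (t)) or the index of a term of S_k^(s+l,t-l).

  Only the invertibility of the g_(s,j) at the point x is used; the openness of U and the
  smoothness of the coefficients play no role.
\<close>

lemma wsign_Un_left:
  fixes A B C :: "'n::{finite,linorder} set"
  assumes "A \<inter> B = {}"
  shows "wsign (A \<union> B) C = wsign A C * wsign B C"
proof -
  have split: "{(i, j). i \<in> A \<union> B \<and> j \<in> C \<and> j < i} =
      {(i, j). i \<in> A \<and> j \<in> C \<and> j < i} \<union> {(i, j). i \<in> B \<and> j \<in> C \<and> j < i}"
    by auto
  have disj: "{(i, j). i \<in> A \<and> j \<in> C \<and> j < i} \<inter> {(i, j). i \<in> B \<and> j \<in> C \<and> j < i}
      = {}"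
    using assms by auto
  show ?thesis
    unfolding wsign_def split by (subst card_Un_disjoint) (auto simp: disj power_add)
qed

lemma wsign_Un_right:
  fixes A B C :: "'n::{finite,linorder} set"
  assumes "B \<inter> C = {}"
  shows "wsign A (B \<union> C) = wsign A B * wsign A C"
proof -
  have split: "{(i, j). i \<in> A \<and> j \<in> B \<union> C \<and> j < i} =
      {(i, j). i \<in> A \<and> j \<in> B \<and> j < i} \<union> {(i, j). i \<in> A \<and> j \<in> C \<and> j < i}"
    by auto
  have disj: "{(i, j). i \<in> A \<and> j \<in> B \<and> j < i} \<inter> {(i, j). i \<in> A \<and> j \<in> C \<and> j < i}
      = {}"
    using assms by auto
  show ?thesis
    unfolding wsign_def split by (subst card_Un_disjoint) (auto simp: disj power_add)
qed

lemma wedge_assoc: "wedge (wedge a b) c = wedge a (wedge b c)"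
proof
  fix K :: "'a set"
  have L: "wedge (wedge a b) c K = (\<Sum>(I, I1)\<in>Sigma (Pow K) Pow.
      wsign I (K - I) * wsign I1 (I - I1) * a I1 * b (I - I1) * c (K - I))"
    unfolding wedge_def
    by (subst sum.Sigma[symmetric]) (auto simp: sum_distrib_left sum_distrib_right mult.assoc intro!: sum.cong)
  have R: "wedge a (wedge b c) K = (\<Sum>(I1, I2)\<in>Sigma (Pow K) (\<lambda>I1. Pow (K - I1)).
      wsign I1 (K - I1) * wsign I2 (K - I1 - I2) * a I1 * b I2 * c (K - I1 - I2))"
    unfolding wedge_def
    by (subst sum.Sigma[symmetric])
      (auto simp: sum_distrib_left mult.assoc mult.left_commute intro!: sum.cong)
  have bij: "bij_betw (\<lambda>(I1, I2). (I1 \<union> I2, I1))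
      (Sigma (Pow K) (\<lambda>I1. Pow (K - I1))) (Sigma (Pow K) Pow)"
    by (rule bij_betwI[where g = "\<lambda>(I, I1). (I1, I - I1)"]) auto
  have "wedge (wedge a b) c K = (\<Sum>(I1, I2)\<in>Sigma (Pow K) (\<lambda>I1. Pow (K - I1)).
      wsign (I1 \<union> I2) (K - (I1 \<union> I2)) * wsign I1 (I1 \<union> I2 - I1)
        * a I1 * b (I1 \<union> I2 - I1) * c (K - (I1 \<union> I2)))"
    unfolding L by (subst sum.reindex_bij_betw[OF bij, symmetric]) (simp add: case_prod_beta)
  also have "\<dots> = wedge a (wedge b c) K"
    unfolding R
  proof (rule sum.cong[OF refl], clarify)
    fix I1 I2 assume "I1 \<subseteq> K" "I2 \<subseteq> K - I1"
    then have disj: "I1 \<inter> I2 = {}" and K: "K - I1 = I2 \<union> (K - I1 - I2)" by auto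
    then have "I1 \<union> I2 - I1 = I2" "K - (I1 \<union> I2) = K - I1 - I2" by auto
    moreover have "wsign I1 (K - I1) = wsign I1 I2 * wsign I1 (K - I1 - I2)"
      by (subst K, rule wsign_Un_right) auto
    ultimately show "wsign (I1 \<union> I2) (K - (I1 \<union> I2)) * wsign I1 (I1 \<union> I2 - I1)
        * a I1 * b (I1 \<union> I2 - I1) * c (K - (I1 \<union> I2))
      = wsign I1 (K - I1) * wsign I2 (K - I1 - I2) * a I1 * b I2 * c (K - I1 - I2)"
      by (simp add: wsign_Un_left[OF disj] algebra_simps)
  qed
  finally show "wedge (wedge a b) c K = wedge a (wedge b c) K" .
qed

lemma wedge_sum_left: "wedge (\<lambda>K. \<Sum>x\<in>S. f x K) c K = (\<Sum>x\<in>S. wedge (f x) c K)"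
  unfolding wedge_def by (simp add: sum_distrib_left sum_distrib_right mult.assoc sum.swap[of _ _ S])

lemma wedge_sum_right: "wedge a (\<lambda>K. \<Sum>x\<in>S. f x K) K = (\<Sum>x\<in>S. wedge a (f x) K)"
  unfolding wedge_def by (simp add: sum_distrib_left sum_distrib_right mult.assoc sum.swap[of _ _ S])

lemma wedge_add_left: "wedge (\<lambda>K. a K + b K) c K = wedge a c K + wedge b c K"
  unfolding wedge_def by (simp add: algebra_simps sum.distrib)

lemma wedge_add_right: "wedge a (\<lambda>K. b K + c K) K = wedge a b K + wedge a c K"
  unfolding wedge_def by (simp add: algebra_simps sum.distrib)

lemma wedge_zero_left [simp]: "wedge (\<lambda>_. 0) b K = 0"
  unfolding wedge_def by simp

lemma wedge_zero_right [simp]: "wedge a (\<lambda>_. 0) K = 0"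
  unfolding wedge_def by simp

lemma wedge_ezero_left [simp]: "wedge ezero b = ezero"
  unfolding ezero_def wedge_def by simp

lemma wedge_ezero_right [simp]: "wedge a ezero = ezero"
  unfolding ezero_def wedge_def by simp

lemma wedge_eunit_left [simp]: "wedge eunit b = b"
proof
  fix K :: "'a set"
  have "wedge eunit b K = (\<Sum>I\<in>Pow K. if I = {} then wsign I (K - I) * b (K - I) else 0)"
    unfolding wedge_def eunit_def by (rule sum.cong) auto
  then show "wedge eunit b K = b K" by (simp add: wsign_def)
qed

lemma wedge_eunit_right [simp]: "wedge a eunit = a"
proof
  fix K :: "'a set"
  have "wedge a eunit K = (\<Sum>I\<in>Pow K. if I = K then wsign I (K - I) * a I else 0)"
    unfolding wedge_def eunit_def by (rule sum.cong) auto
  then show "wedge a eunit K = a K" by (simp add: wsign_def)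
qed

lemma mmul_assoc: "mmul q1 (mmul q2 A B) C = mmul q2 A (mmul q1 B C)"
  unfolding mmul_def
  by (simp add: wedge_sum_left wedge_sum_right wedge_assoc, subst sum.swap, rule refl)

lemma madd_apply: "madd A B i j K = A i j K + B i j K"
  by (simp add: madd_def)

lemma mmul_madd_left: "mmul q (madd A B) C i j K = mmul q A C i j K + mmul q B C i j K"
  unfolding mmul_def madd_def by (simp add: wedge_add_left sum.distrib)

lemma mmul_madd_right: "mmul q A (madd B C) i j K = mmul q A B i j K + mmul q A C i j K"
  unfolding mmul_def madd_def by (simp add: wedge_add_right sum.distrib)

lemma mmul_sum_left:
  "mmul q (\<lambda>i j K. \<Sum>x\<in>S. F x i j K) B i j K = (\<Sum>x\<in>S. mmul q (F x) B i j K)"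
  unfolding mmul_def by (simp add: wedge_sum_left, rule sum.swap)

lemma mmul_zero_left [simp]: "mmul q (\<lambda>i j K. 0) B i j K = 0"
  unfolding mmul_def by simp

lemma mmul_cong_row: "(\<And>l. l < q \<Longrightarrow> A i l = A' i l) \<Longrightarrow> mmul q A B i j = mmul q A' B i j"
  unfolding mmul_def by simp

lemma mmul_cong_col: "(\<And>l. l < q \<Longrightarrow> B l j = B' l j) \<Longrightarrow> mmul q A B i j = mmul q A B' i j"
  unfolding mmul_def by simp

lemma mmul_idm_left:
  assumes "i < q"
  shows "mmul q (idm q) A i j = A i j"
proof
  fix K
  have "mmul q (idm q) A i j K = (\<Sum>l<q. if l = i then A i j K else 0)"
    unfolding mmul_def by (rule sum.cong) (auto simp: idm_def ezero_def)
  then show "mmul q (idm q) A i j K = A i j K"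
    using assms by simp
qed

lemma mmul_idm_right:
  assumes "j < q"
  shows "mmul q A (idm q) i j = A i j"
proof
  fix K
  have "mmul q A (idm q) i j K = (\<Sum>l<q. if l = j then A i j K else 0)"
    unfolding mmul_def by (rule sum.cong) (auto simp: idm_def ezero_def)
  then show "mmul q A (idm q) i j K = A i j K"
    using assms by simp
qed

definition square_fmat :: "nat \<Rightarrow> 'n fmat \<Rightarrow> bool" where
  "square_fmat q A \<longleftrightarrow> (\<forall>i j. (q \<le> i \<or> q \<le> j) \<longrightarrow> A i j = ezero)"

definition is_minv :: "nat \<Rightarrow> 'n::{finite,linorder} fmat \<Rightarrow> 'n fmat \<Rightarrow> bool" where
  "is_minv q A B \<longleftrightarrow> square_fmat q B \<and> mmul q A B = idm q \<and> mmul q B A = idm q"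

definition minvertible :: "nat \<Rightarrow> 'n::{finite,linorder} fmat \<Rightarrow> bool" where
  "minvertible q A \<longleftrightarrow> square_fmat q A \<and> (\<exists>B. is_minv q A B)"

lemma square_fmat_idm: "square_fmat q (idm q)"
  unfolding square_fmat_def idm_def by auto

lemma square_fmat_madd: "square_fmat q A \<Longrightarrow> square_fmat q B \<Longrightarrow> square_fmat q (madd A B)"
  unfolding square_fmat_def madd_def by (auto simp: ezero_def)

lemma square_fmat_mmul:
  assumes "square_fmat q A" "square_fmat q B"
  shows "square_fmat q (mmul q A B)"
  unfolding square_fmat_def
proof (intro allI impI)
  fix i j assume "q \<le> i \<or> q \<le> j"
  then have "wedge (A i l) (B l j) = ezero" if "l < q" for l
    using assms that unfolding square_fmat_def by force
  then show "mmul q A B i j = ezero"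
    unfolding mmul_def by (auto simp: ezero_def intro!: sum.neutral)
qed

lemma mmul_idm_left_square:
  assumes "square_fmat q A"
  shows "mmul q (idm q) A = A"
proof (intro ext)
  fix i j K
  show "mmul q (idm q) A i j K = A i j K"
  proof (cases "i < q")
    case True
    then show ?thesis by (simp add: mmul_idm_left)
  next
    case False
    then have "A i j = ezero"
      using assms by (simp add: square_fmat_def)
    with False show ?thesis
      by (simp add: mmul_def idm_def ezero_def)
  qed
qed

lemma minvertible_idm: "minvertible q (idm q)"
  unfolding minvertible_def is_minv_def
  using square_fmat_idm mmul_idm_left_square by blast

lemma minvertible_mmul:
  assumes "minvertible q A" "minvertible q C"
  shows "minvertible q (mmul q A C)"
proof -
  obtain A' C' where A': "is_minv q A A'" and C': "is_minv q C C'"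
    using assms unfolding minvertible_def by blast
  have sq: "square_fmat q A" "square_fmat q C" "square_fmat q A'" "square_fmat q C'"
    using assms A' C' by (auto simp: minvertible_def is_minv_def)
  have "mmul q (mmul q A C) (mmul q C' A') = mmul q A (mmul q (mmul q C C') A')"
    by (simp add: mmul_assoc)
  also have "\<dots> = idm q"
    using A' C' sq by (simp add: is_minv_def mmul_idm_left_square)
  finally have right: "mmul q (mmul q A C) (mmul q C' A') = idm q" .
  have "mmul q (mmul q C' A') (mmul q A C) = mmul q C' (mmul q (mmul q A' A) C)"
    by (simp add: mmul_assoc)
  also have "\<dots> = idm q"
    using A' C' sq by (simp add: is_minv_def mmul_idm_left_square)
  finally have left: "mmul q (mmul q C' A') (mmul q A C) = idm q" .
  show ?thesis
    unfolding minvertible_def is_minv_def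
    using left right sq by (blast intro: square_fmat_mmul)
qed

lemma mmul_minv_left:
  assumes "minvertible q A"
  shows "mmul q (minv q A) A = idm q"
proof -
  have "minv q A = (SOME B. is_minv q A B)"
    unfolding minv_def is_minv_def square_fmat_def ..
  then have "is_minv q A (minv q A)"
    using assms unfolding minvertible_def by (metis someI)
  then show ?thesis
    unfolding is_minv_def by blast
qed

lemma gs_0: "gs p \<eta> s 0 x = idm (p s)"
  by (simp add: gs_def gsj_def)

lemma gs_Suc: "gs p \<eta> s (Suc k) x = mmul (p s) (gs p \<eta> s k x) (gsj p \<eta> s (Suc k) x)"
  unfolding gs_def by simp

lemma gsj_Suc: "gsj p \<eta> s (Suc k) x = madd (idm (p s)) (\<eta> (Suc k) s 0 x)"
  by (simp add: gsj_def)

lemma inP_outside: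
  assumes "inP m p U \<eta>" "m < s"
  shows "\<eta> s k x = (\<lambda>i j. ezero)"
  using assms unfolding inP_def by simp

lemma inP_square_fmat:
  assumes "inP m p U \<eta>"
  shows "square_fmat (p s) (\<eta> s 0 x)"
proof (cases "s \<le> m")
  case True
  then show ?thesis
    using assms[unfolded inP_def, THEN conjunct2, THEN conjunct1, rule_format, of s 0]
    by (simp add: square_fmat_def)
next
  case False
  then show ?thesis
    using inP_outside[OF assms] by (simp add: square_fmat_def)
qed

lemma inP_inverse:
  assumes "inP m p U \<eta>" "s \<le> m" "x \<in> U"
  shows "\<exists>B. is_minv (p s) (madd (idm (p s)) (\<eta> s 0 x)) B"
proof -
  obtain B where "\<forall>x i j. (p s \<le> i \<or> p s \<le> j) \<longrightarrow> B x i j = ezero"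
    "\<forall>x\<in>U. mmul (p s) (madd (idm (p s)) (\<eta> s 0 x)) (B x) = idm (p s)
           \<and> mmul (p s) (B x) (madd (idm (p s)) (\<eta> s 0 x)) = idm (p s)"
    using assms(1)[unfolded inP_def, THEN conjunct2, THEN conjunct2, rule_format, OF assms(2)]
    by blast
  then have "is_minv (p s) (madd (idm (p s)) (\<eta> s 0 x)) (B x)"
    using assms(3) by (simp add: is_minv_def square_fmat_def)
  then show ?thesis by blast
qed

lemma gsj_minvertible:
  assumes "\<And>j. j \<ge> 1 \<Longrightarrow> inP m p U (\<eta> j)" and "x \<in> U"
  shows "minvertible (p s) (gsj p \<eta> s j x)"
proof (cases "j = 0 \<or> m < s")
  case True
  then have "gsj p \<eta> s j x = idm (p s)"
    using inP_outside[OF assms(1)] by (auto simp: gsj_def madd_def ezero_def)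
  then show ?thesis
    by (simp add: minvertible_idm)
next
  case False
  then have P: "inP m p U (\<eta> j)"
    using assms(1) by simp
  show ?thesis
    unfolding minvertible_def gsj_def
    using False inP_inverse[OF P _ assms(2)]
    by (simp add: square_fmat_madd square_fmat_idm inP_square_fmat[OF P])
qed

lemma gs_minvertible:
  assumes "\<And>j. j \<ge> 1 \<Longrightarrow> inP m p U (\<eta> j)" and "x \<in> U"
  shows "minvertible (p s) (gs p \<eta> s k x)"
proof (induction k)
  case 0
  then show ?case by (simp add: gs_0 minvertible_idm)
next
  case (Suc k)
  then show ?case
    unfolding gs_Suc by (rule minvertible_mmul[OF _ gsj_minvertible[OF assms]])
qed

section \<open>Compositions: the index sets \<open>\<Delta>\<^sub>t\<close>\<close>

(* Delta t consists of the compositions (\<tau>\<^sub>1, ..., \<tau>\<^sub>\<rho>) of t, padded with zeros;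
   comp_cons l \<tau> prepends the part l. *)

definition comp_single :: "nat \<Rightarrow> nat \<Rightarrow> nat" where
  "comp_single t = (\<lambda>j. if j = 1 then t else 0)"

definition comp_cons :: "nat \<Rightarrow> (nat \<Rightarrow> nat) \<Rightarrow> nat \<Rightarrow> nat" where
  "comp_cons l \<tau> = (\<lambda>j. if j = 0 then 0 else if j = 1 then l else \<tau> (j - 1))"

lemma comp_cons_first: "comp_cons l \<tau> 1 = l"
  by (simp add: comp_cons_def)

lemma DeltaD:
  assumes "\<tau> \<in> Delta t"
  shows "\<tau> 0 = 0" and "t < j \<Longrightarrow> \<tau> j = 0"
    and "2 \<le> j \<Longrightarrow> j \<le> t \<Longrightarrow> \<tau> j \<noteq> 0 \<Longrightarrow> \<tau> (j - 1) \<noteq> 0"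
    and "(\<Sum>j=1..t. \<tau> j) = t"
  using assms by (auto simp: Delta_def)

lemma Delta_le: "\<tau> \<in> Delta t \<Longrightarrow> \<tau> j \<noteq> 0 \<Longrightarrow> j \<le> t"
  using DeltaD(2) by (meson not_le)

lemma Delta_nonzero_below:
  assumes D: "\<tau> \<in> Delta t" and "\<tau> j \<noteq> 0" "1 \<le> i" "i \<le> j"
  shows "\<tau> i \<noteq> 0"
  using \<open>i \<le> j\<close> \<open>\<tau> j \<noteq> 0\<close>
proof (induction i rule: inc_induct)
  case (step n)
  then have "\<tau> (Suc n - 1) \<noteq> 0"
    using DeltaD(3)[OF D, of "Suc n"] Delta_le[OF D] \<open>1 \<le> i\<close> by simp
  then show ?case by simp
qed

lemma Delta_nonzero:
  assumes D: "\<tau> \<in> Delta t" and "1 \<le> t"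
  obtains j where "1 \<le> j" "j \<le> t" "\<tau> j \<noteq> 0"
proof -
  have "(\<Sum>j=1..t. \<tau> j) \<noteq> 0"
    using DeltaD(4)[OF D] \<open>1 \<le> t\<close> by simp
  then show ?thesis
    using that by (meson atLeastAtMost_iff sum.neutral)
qed

lemma Delta_first_part_bound:
  assumes D: "\<tau> \<in> Delta t" and nz: "\<tau> (Suc j) \<noteq> 0"
  shows "\<tau> 1 + j \<le> t"
proof -
  have "\<tau> 1 + j = \<tau> 1 + (\<Sum>i=2..Suc j. 1)"
    by simp
  also have "\<dots> \<le> \<tau> 1 + (\<Sum>i=2..Suc j. \<tau> i)"
    using Delta_nonzero_below[OF D nz] by (intro add_left_mono sum_mono) (simp add: Suc_leI)
  also have "\<dots> = (\<Sum>i=1..Suc j. \<tau> i)"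
    by (simp add: sum.atLeast_Suc_atMost numeral_2_eq_2)
  also have "\<dots> \<le> (\<Sum>i=1..t. \<tau> i)"
    using Delta_le[OF D nz] by (intro sum_mono2) auto
  finally show ?thesis
    using DeltaD(4)[OF D] by simp
qed

lemma sum_comp_cons: "1 \<le> n \<Longrightarrow> (\<Sum>j=1..n. comp_cons l \<tau> j) = l + (\<Sum>j=1..n - 1. \<tau> j)"
proof -
  assume "1 \<le> n"
  then have "(\<Sum>j=1..n. comp_cons l \<tau> j) = l + (\<Sum>j=Suc 1..Suc (n - 1). comp_cons l \<tau> j)"
    by (simp add: sum.atLeast_Suc_atMost comp_cons_def)
  also have "(\<Sum>j=Suc 1..Suc (n - 1). comp_cons l \<tau> j) = (\<Sum>j=1..n - 1. \<tau> j)"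
    by (subst sum.shift_bounds_cl_Suc_ivl) (simp add: comp_cons_def)
  finally show ?thesis .
qed

lemma comp_single_Delta: "1 \<le> t \<Longrightarrow> comp_single t \<in> Delta t"
  unfolding Delta_def comp_single_def by (auto simp: sum.delta)

lemma comp_cons_Delta:
  assumes l: "1 \<le> l" "l < t" and D: "\<tau> \<in> Delta (t - l)"
  shows "comp_cons l \<tau> \<in> Delta t"
proof -
  have "(\<Sum>j=1..t - 1. \<tau> j) = (\<Sum>j=1..t - l. \<tau> j)"
    using l DeltaD(2)[OF D] by (intro sum.mono_neutral_right) auto
  then have "(\<Sum>j=1..t. comp_cons l \<tau> j) = t"
    using l sum_comp_cons[of t l \<tau>] DeltaD(4)[OF D] by simp
  moreover have "comp_cons l \<tau> (j - 1) \<noteq> 0"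
    if "j \<in> {2..t}" "comp_cons l \<tau> j \<noteq> 0" for j
  proof (cases "j = 2")
    case False
    then have "\<tau> (j - 1) \<noteq> 0"
      using that by (simp add: comp_cons_def)
    then have "\<tau> (j - 1 - 1) \<noteq> 0"
      using DeltaD(3)[OF D, of "j - 1"] Delta_le[OF D] False that(1) by auto
    then show ?thesis
      using False that(1) l by (auto simp: comp_cons_def)
  qed (use l in \<open>simp add: comp_cons_def\<close>)
  ultimately show ?thesis
    using DeltaD(2)[OF D] l unfolding Delta_def by (auto simp: comp_cons_def)
qed

lemma Delta_cases:
  assumes D: "\<tau> \<in> Delta t" and "1 \<le> t"
  obtains "\<tau> = comp_single t"
    | l \<tau>' where "l \<in> {1..<t}" "\<tau>' \<in> Delta (t - l)" "\<tau> = comp_cons l \<tau>'"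
proof (cases "\<tau> 1 = t")
  case True
  have "(\<Sum>j=Suc 1..t. \<tau> j) = 0"
    using DeltaD(4)[OF D] True \<open>1 \<le> t\<close> by (simp add: sum.atLeast_Suc_atMost)
  then have "\<tau> j = comp_single t j" for j
    using DeltaD(1)[OF D] DeltaD(2)[OF D, of j] True
    by (cases "j = 0 \<or> j = 1 \<or> t < j") (auto simp: comp_single_def)
  then show ?thesis
    using that(1) by blast
next
  case False
  define l where "l = \<tau> 1"
  define \<tau>' where "\<tau>' = (\<lambda>j. if j = 0 then 0 else \<tau> (Suc j))"
  have \<tau>: "\<tau> = comp_cons l \<tau>'"
    using DeltaD(1)[OF D] by (auto simp: comp_cons_def l_def \<tau>'_def)
  obtain j where "1 \<le> j" "\<tau> j \<noteq> 0"
    using Delta_nonzero[OF D \<open>1 \<le> t\<close>] by blast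
  then have "1 \<le> l"
    using Delta_nonzero_below[OF D, of j 1] by (simp add: l_def)
  have sum: "l + (\<Sum>j=1..t - 1. \<tau>' j) = t"
    using DeltaD(4)[OF D] sum_comp_cons[of t l \<tau>'] \<open>1 \<le> t\<close> by (simp add: \<tau>[symmetric])
  then have "l < t"
    using False by (simp add: l_def)
  have vanish: "\<tau>' j = 0" if "t - l < j" for j
    using Delta_first_part_bound[OF D, of j] that unfolding \<tau>'_def l_def
    by (cases "\<tau> (Suc j) = 0") auto
  have "(\<Sum>j=1..t - 1. \<tau>' j) = (\<Sum>j=1..t - l. \<tau>' j)"
    using vanish \<open>1 \<le> l\<close> by (intro sum.mono_neutral_right) auto
  with sum have "(\<Sum>j=1..t - l. \<tau>' j) = t - l"
    by simp
  moreover have "\<tau>' (j - 1) \<noteq> 0" if "j \<in> {2..t - l}" "\<tau>' j \<noteq> 0" for j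
    using DeltaD(3)[OF D, of "Suc j"] that \<open>1 \<le> l\<close> by (auto simp: \<tau>'_def)
  ultimately have "\<tau>' \<in> Delta (t - l)"
    unfolding Delta_def using vanish by (simp add: \<tau>'_def)
  then show ?thesis
    using that(2) \<tau> \<open>1 \<le> l\<close> \<open>l < t\<close> by simp
qed

lemma Delta_decomp:
  assumes "1 \<le> t"
  shows "Delta t = insert (comp_single t) (\<Union>l\<in>{1..<t}. comp_cons l ` Delta (t - l))"
proof
  show "Delta t \<subseteq> insert (comp_single t) (\<Union>l\<in>{1..<t}. comp_cons l ` Delta (t - l))"
  proof
    fix \<tau> assume "\<tau> \<in> Delta t"
    then show "\<tau> \<in> insert (comp_single t) (\<Union>l\<in>{1..<t}. comp_cons l ` Delta (t - l))"
      by (cases rule: Delta_cases[OF _ assms]) auto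
  qed
  show "insert (comp_single t) (\<Union>l\<in>{1..<t}. comp_cons l ` Delta (t - l)) \<subseteq> Delta t"
    using comp_single_Delta[OF assms] comp_cons_Delta by auto
qed

lemma Delta_0: "Delta 0 = {\<lambda>_. 0}"
proof -
  have "\<tau> = (\<lambda>_. 0)" if "\<tau> \<in> Delta 0" for \<tau>
  proof
    fix j
    show "\<tau> j = 0"
      using that by (cases j) (auto simp: Delta_def)
  qed
  then show ?thesis
    unfolding Delta_def by auto
qed

lemma finite_Delta: "finite (Delta t)"
proof (induction t rule: less_induct)
  case (less t)
  then show ?case
    by (cases "t = 0") (simp_all add: Delta_0 Delta_decomp)
qed

lemma inj_on_comp_cons: "inj_on (comp_cons l) (Delta t)"
proof (rule inj_onI)
  fix \<tau> \<tau>' assume D: "\<tau> \<in> Delta t" "\<tau>' \<in> Delta t"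
    and eq: "comp_cons l \<tau> = comp_cons l \<tau>'"
  show "\<tau> = \<tau>'"
  proof
    fix j
    show "\<tau> j = \<tau>' j"
      using DeltaD(1)[OF D(1)] DeltaD(1)[OF D(2)] fun_cong[OF eq, of "Suc j"]
      by (cases j) (auto simp: comp_cons_def)
  qed
qed

lemma sum_Delta:
  assumes "1 \<le> t"
  shows "(\<Sum>\<tau>\<in>Delta t. h \<tau>) =
    h (comp_single t) + (\<Sum>l\<in>{1..<t}. \<Sum>\<tau>\<in>Delta (t - l). h (comp_cons l \<tau>))"
proof -
  have "comp_single t \<notin> comp_cons l ` A" if "l < t" for l A
  proof
    assume "comp_single t \<in> comp_cons l ` A"
    then have "comp_single t 1 = l"
      using comp_cons_first by auto
    with that show False
      by (simp add: comp_single_def)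
  qed
  then have "comp_single t \<notin> (\<Union>l\<in>{1..<t}. comp_cons l ` Delta (t - l))"
    by simp
  then have "(\<Sum>\<tau>\<in>Delta t. h \<tau>) =
      h (comp_single t) + (\<Sum>\<tau>\<in>(\<Union>l\<in>{1..<t}. comp_cons l ` Delta (t - l)). h \<tau>)"
    by (simp add: Delta_decomp[OF assms] finite_Delta)
  also have "(\<Sum>\<tau>\<in>(\<Union>l\<in>{1..<t}. comp_cons l ` Delta (t - l)). h \<tau>)
      = (\<Sum>l\<in>{1..<t}. \<Sum>\<tau>\<in>comp_cons l ` Delta (t - l). h \<tau>)"
  proof (rule sum.UNION_disjoint)
    show "\<forall>l\<in>{1..<t}. \<forall>l'\<in>{1..<t}. l \<noteq> l' \<longrightarrow>
        comp_cons l ` Delta (t - l) \<inter> comp_cons l' ` Delta (t - l') = {}"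
      using comp_cons_first by (metis disjoint_iff imageE)
  qed (simp_all add: finite_Delta)
  also have "\<dots> = (\<Sum>l\<in>{1..<t}. \<Sum>\<tau>\<in>Delta (t - l). h (comp_cons l \<tau>))"
    by (simp add: sum.reindex[OF inj_on_comp_cons])
  finally show ?thesis .
qed

lemma finite_Delta_support: "\<tau> \<in> Delta t \<Longrightarrow> finite {j. \<tau> j \<noteq> 0}"
  by (rule finite_subset[of _ "{..t}"]) (auto dest: Delta_le)

lemma
  assumes D: "\<tau> \<in> Delta t" and "1 \<le> t"
  shows rho_pos: "1 \<le> rho \<tau>" and rho_nonzero: "\<tau> (rho \<tau>) \<noteq> 0"
proof -
  obtain j where j: "1 \<le> j" "\<tau> j \<noteq> 0"
    using Delta_nonzero[OF assms] by blast
  have "j \<le> rho \<tau>"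
    unfolding rho_def using j finite_Delta_support[OF D] by (intro Max_ge) auto
  with j show "1 \<le> rho \<tau>"
    by simp
  have "rho \<tau> \<in> {j. \<tau> j \<noteq> 0}"
    unfolding rho_def using j finite_Delta_support[OF D] by (intro Max_in) auto
  then show "\<tau> (rho \<tau>) \<noteq> 0"
    by simp
qed

lemma rho_comp_single: "1 \<le> t \<Longrightarrow> rho (comp_single t) = 1"
proof -
  assume "1 \<le> t"
  then have "{j. comp_single t j \<noteq> 0} = {1}"
    by (auto simp: comp_single_def)
  then show ?thesis
    by (simp add: rho_def)
qed

lemma rho_comp_cons:
  assumes "1 \<le> l" and D: "\<tau> \<in> Delta t" and "1 \<le> t"
  shows "rho (comp_cons l \<tau>) = Suc (rho \<tau>)"
proof -
  let ?S = "{j. \<tau> j \<noteq> 0}"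
  have "{j. comp_cons l \<tau> j \<noteq> 0} = insert 1 (Suc ` ?S)"
  proof (rule set_eqI)
    fix j
    show "j \<in> {j. comp_cons l \<tau> j \<noteq> 0} \<longleftrightarrow> j \<in> insert 1 (Suc ` ?S)"
      using \<open>1 \<le> l\<close> DeltaD(1)[OF D] by (cases j) (auto simp: comp_cons_def)
  qed
  moreover have "Max (insert 1 (Suc ` ?S)) = Suc (rho \<tau>)"
  proof (rule Max_eqI)
    show "finite (insert 1 (Suc ` ?S))"
      using finite_Delta_support[OF D] by simp
    show "Suc (rho \<tau>) \<in> insert 1 (Suc ` ?S)"
      using rho_nonzero[OF D \<open>1 \<le> t\<close>] by simp
    fix y assume "y \<in> insert 1 (Suc ` ?S)"
    then show "y \<le> Suc (rho \<tau>)"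
      using finite_Delta_support[OF D] unfolding rho_def by (auto intro: Max_ge)
  qed
  ultimately show ?thesis
    by (simp add: rho_def)
qed

lemma
  assumes "rho (comp_cons l \<tau>) = Suc (rho \<tau>)" and "r \<le> rho \<tau>"
  shows sigma_comp_cons: "sigma (comp_cons l \<tau>) r = l + sigma \<tau> r"
    and sigma'_comp_cons: "sigma' (comp_cons l \<tau>) r = l + sigma' \<tau> r"
    and comp_cons_rev_index:
      "1 \<le> r \<Longrightarrow> comp_cons l \<tau> (rho (comp_cons l \<tau>) + 1 - r) = \<tau> (rho \<tau> + 1 - r)"
  using assms sum_comp_cons[of "Suc (rho \<tau>) - r" l \<tau>] sum_comp_cons[of "Suc (rho \<tau>) + 1 - r" l \<tau>]
  by (simp_all add: sigma_def sigma'_def comp_cons_def Suc_diff_le)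

lemma
  assumes "rho (comp_cons l \<tau>) = Suc (rho \<tau>)"
  shows sigma_comp_cons_last: "sigma (comp_cons l \<tau>) (Suc (rho \<tau>)) = 0"
    and sigma'_comp_cons_last: "sigma' (comp_cons l \<tau>) (Suc (rho \<tau>)) = l"
  using assms by (simp_all add: sigma_def sigma'_def comp_cons_def)

lemma JsetD:
  assumes "J \<in> Jset k \<rho>"
  shows "r = 0 \<or> \<rho> < r \<Longrightarrow> J r = 0"
    and "1 \<le> r \<Longrightarrow> r \<le> \<rho> \<Longrightarrow> 1 \<le> J r"
    and "1 \<le> r \<Longrightarrow> r \<le> \<rho> \<Longrightarrow> J r \<le> k"
    and "1 \<le> r \<Longrightarrow> r < \<rho> \<Longrightarrow> J r < J (Suc r)"
  using assms unfolding Jset_def by auto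

lemma JsetI:
  assumes "\<And>r. r = 0 \<or> \<rho> < r \<Longrightarrow> J r = 0"
    and "\<And>r. 1 \<le> r \<Longrightarrow> r \<le> \<rho> \<Longrightarrow> 1 \<le> J r \<and> J r \<le> k"
    and "\<And>r. 1 \<le> r \<Longrightarrow> r < \<rho> \<Longrightarrow> J r < J (Suc r)"
  shows "J \<in> Jset k \<rho>"
  using assms unfolding Jset_def by auto

lemma Jset_0: "Jset k 0 = {\<lambda>_. 0}"
proof -
  have "J = (\<lambda>_. 0)" if "J \<in> Jset k 0" for J
  proof
    fix r
    show "J r = 0"
      using JsetD(1)[OF that] by (cases r) auto
  qed
  then show ?thesis
    by (auto intro: JsetI)
qed

lemma Jset_0_empty: "1 \<le> \<rho> \<Longrightarrow> Jset 0 \<rho> = {}"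
  using JsetD(2,3)[of _ 0 \<rho> \<rho>] by fastforce

lemma Jset_mono:
  assumes J: "J \<in> Jset k \<rho>" and "1 \<le> r" "r \<le> r'" "r' \<le> \<rho>"
  shows "J r \<le> J r'"
  using \<open>r \<le> r'\<close> \<open>r' \<le> \<rho>\<close>
proof (induction r' rule: dec_induct)
  case (step n)
  then have "J n < J (Suc n)"
    using JsetD(4)[OF J] \<open>1 \<le> r\<close> by simp
  with step show ?case
    by simp
qed simp

lemma Jset_subset_Jset_Suc: "Jset k \<rho> \<subseteq> Jset (Suc k) \<rho>"
  using JsetD by (intro subsetI JsetI) (auto intro: le_SucI)

lemma fun_upd_in_Jset_Suc:
  assumes "1 \<le> \<rho>" and J: "J \<in> Jset k (\<rho> - 1)"
  shows "J(\<rho> := Suc k) \<in> Jset (Suc k) \<rho>"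
proof (rule JsetI)
  fix r assume "r = 0 \<or> \<rho> < r"
  then have "r \<noteq> \<rho>" "r = 0 \<or> \<rho> - 1 < r"
    using \<open>1 \<le> \<rho>\<close> by auto
  then show "(J(\<rho> := Suc k)) r = 0"
    using JsetD(1)[OF J] by simp
next
  fix r assume r: "1 \<le> r" "r \<le> \<rho>"
  show "1 \<le> (J(\<rho> := Suc k)) r \<and> (J(\<rho> := Suc k)) r \<le> Suc k"
  proof (cases "r = \<rho>")
    case False
    with r have "r \<le> \<rho> - 1"
      by simp
    then have "1 \<le> J r" "J r \<le> k"
      using JsetD(2,3)[OF J r(1)] by auto
    with False show ?thesis
      by simp
  qed simp
next
  fix r assume r: "1 \<le> r" "r < \<rho>"
  show "(J(\<rho> := Suc k)) r < (J(\<rho> := Suc k)) (Suc r)"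
  proof (cases "Suc r = \<rho>")
    case True
    then have "J r \<le> k"
      using JsetD(3)[OF J r(1)] by simp
    with True show ?thesis
      by simp
  next
    case False
    with r have "r < \<rho> - 1"
      by simp
    then show ?thesis
      using JsetD(4)[OF J r(1)] False r by simp
  qed
qed

lemma Jset_SucE:
  assumes "1 \<le> \<rho>" and J: "J \<in> Jset (Suc k) \<rho>"
  obtains "J \<in> Jset k \<rho>"
    | J' where "J' \<in> Jset k (\<rho> - 1)" "J = J'(\<rho> := Suc k)"
proof (cases "J \<rho> \<le> k")
  case True
  then have "J r \<le> k" if "1 \<le> r" "r \<le> \<rho>" for r
    using Jset_mono[OF J that order_refl] by simp
  then have "J \<in> Jset k \<rho>"
    using JsetD[OF J] by (intro JsetI) auto
  then show ?thesis
    using that(1) by blast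
next
  case False
  then have J\<rho>: "J \<rho> = Suc k"
    using JsetD(3)[OF J, of \<rho>] assms(1) by simp
  have "J r \<le> k" if "1 \<le> r" "r < \<rho>" for r
    using JsetD(4)[OF J, of r] Jset_mono[OF J, of "Suc r" \<rho>] J\<rho> that by simp
  then have "J(\<rho> := 0) \<in> Jset k (\<rho> - 1)"
    using JsetD[OF J] by (intro JsetI) auto
  moreover have "J = (J(\<rho> := 0))(\<rho> := Suc k)"
    using J\<rho> by auto
  ultimately show ?thesis
    using that(2) by blast
qed

lemma Jset_Suc:
  assumes "1 \<le> \<rho>"
  shows "Jset (Suc k) \<rho> = Jset k \<rho> \<union> (\<lambda>J. J(\<rho> := Suc k)) ` Jset k (\<rho> - 1)"
proof
  show "Jset (Suc k) \<rho> \<subseteq> Jset k \<rho> \<union> (\<lambda>J. J(\<rho> := Suc k)) ` Jset k (\<rho> - 1)"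
    by (blast elim: Jset_SucE[OF assms])
  show "Jset k \<rho> \<union> (\<lambda>J. J(\<rho> := Suc k)) ` Jset k (\<rho> - 1) \<subseteq> Jset (Suc k) \<rho>"
    using Jset_subset_Jset_Suc fun_upd_in_Jset_Suc[OF assms] by blast
qed

lemma finite_Jset: "finite (Jset k \<rho>)"
proof (induction k arbitrary: \<rho>)
  case 0
  then show ?case
    by (cases \<rho>) (simp_all add: Jset_0 Jset_0_empty)
next
  case (Suc k)
  then show ?case
    by (cases \<rho>) (simp_all add: Jset_0 Jset_Suc)
qed

lemma sum_Jset_Suc:
  assumes "1 \<le> \<rho>"
  shows "(\<Sum>J\<in>Jset (Suc k) \<rho>. f J) =
    (\<Sum>J\<in>Jset k \<rho>. f J) + (\<Sum>J\<in>Jset k (\<rho> - 1). f (J(\<rho> := Suc k)))"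
proof -
  have "J \<rho> \<le> k" if "J \<in> Jset k \<rho>" for J
    using JsetD(3)[OF that, of \<rho>] assms by simp
  then have disj: "Jset k \<rho> \<inter> (\<lambda>J. J(\<rho> := Suc k)) ` Jset k (\<rho> - 1) = {}"
    by fastforce
  have "J \<rho> = 0" if "J \<in> Jset k (\<rho> - 1)" for J
    using JsetD(1)[OF that, of \<rho>] assms by simp
  then have inj: "inj_on (\<lambda>J. J(\<rho> := Suc k)) (Jset k (\<rho> - 1))"
    by (intro inj_onI) (metis fun_upd_triv fun_upd_upd)
  have "(\<Sum>J\<in>Jset (Suc k) \<rho>. f J) =
      (\<Sum>J\<in>Jset k \<rho>. f J) + (\<Sum>J\<in>(\<lambda>J. J(\<rho> := Suc k)) ` Jset k (\<rho> - 1). f J)"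
    unfolding Jset_Suc[OF assms]
    by (rule sum.union_disjoint[OF finite_Jset finite_imageI[OF finite_Jset] disj])
  also have "(\<Sum>J\<in>(\<lambda>J. J(\<rho> := Suc k)) ` Jset k (\<rho> - 1). f J) =
      (\<Sum>J\<in>Jset k (\<rho> - 1). f (J(\<rho> := Suc k)))"
    by (rule sum.reindex[OF inj, unfolded comp_def])
  finally show ?thesis .
qed

section \<open>The recursion for the right-hand side\<close>

lemma mchain_1: "mchain d F (Suc 0) = F 1"
  by (simp add: mchain_def)

lemma mchain_Suc: "1 \<le> n \<Longrightarrow> mchain d F (Suc n) = mmul (d n) (mchain d F n) (F (Suc n))"
  unfolding mchain_def by simp

lemma mchain_cong:
  assumes "1 \<le> n"
    and "\<And>r. 1 \<le> r \<Longrightarrow> r \<le> n \<Longrightarrow> F r = F' r"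
    and "\<And>r. 1 \<le> r \<Longrightarrow> r < n \<Longrightarrow> d r = d' r"
  shows "mchain d F n = mchain d' F' n"
  using assms
proof (induction n rule: dec_induct)
  case base
  then show ?case
    by (simp add: mchain_1)
next
  case (step n)
  then show ?case
    by (simp add: mchain_Suc)
qed

definition rhs_term :: "(nat \<Rightarrow> nat) \<Rightarrow> (nat \<Rightarrow> ('x, 'n::{finite,linorder}) fam)
    \<Rightarrow> nat \<Rightarrow> (nat \<Rightarrow> nat) \<Rightarrow> (nat \<Rightarrow> nat) \<Rightarrow> 'x \<Rightarrow> 'n fmat" where
  "rhs_term p \<eta> s \<tau> J x = mchain (\<lambda>r. p (s + sigma \<tau> r)) (factor p \<eta> s \<tau> J x) (rho \<tau>)"

definition rhs_sum :: "(nat \<Rightarrow> nat) \<Rightarrow> (nat \<Rightarrow> ('x, 'n::{finite,linorder}) fam)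
    \<Rightarrow> nat \<Rightarrow> nat \<Rightarrow> nat \<Rightarrow> 'x \<Rightarrow> 'n fmat" where
  "rhs_sum p \<eta> k s t x =
     (\<lambda>i j K. \<Sum>\<tau>\<in>Delta t. \<Sum>J\<in>Jset k (rho \<tau>). rhs_term p \<eta> s \<tau> J x i j K)"

definition last_factor :: "(nat \<Rightarrow> nat) \<Rightarrow> (nat \<Rightarrow> ('x, 'n::{finite,linorder}) fam)
    \<Rightarrow> nat \<Rightarrow> nat \<Rightarrow> nat \<Rightarrow> 'x \<Rightarrow> 'n fmat" where
  "last_factor p \<eta> k s l x =
     mmul (p s) (mmul (p (s + l)) (gs p \<eta> (s + l) k x) (\<eta> (Suc k) s l x))
       (minv (p s) (gs p \<eta> s (Suc k) x))"

lemma rhs_eq: "rhs p \<eta> k s t x = mmul (p s) (rhs_sum p \<eta> k s t x) (gs p \<eta> s k x)"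
  unfolding rhs_def rhs_sum_def rhs_term_def ..

lemma rhs_term_comp_single:
  assumes "1 \<le> t"
  shows "rhs_term p \<eta> s (comp_single t) ((\<lambda>_. 0)(1 := Suc k)) x = last_factor p \<eta> k s t x"
proof -
  have "rho (comp_single t) = 1"
    using rho_comp_single[OF assms] .
  moreover from this have "sigma (comp_single t) 1 = 0" "sigma' (comp_single t) 1 = t"
    "comp_single t 1 = t"
    by (simp_all add: sigma_def sigma'_def comp_single_def)
  ultimately show ?thesis
    by (simp add: rhs_term_def mchain_1 factor_def last_factor_def)
qed

(* The factors run through the parts of \<tau> backwards, so prepending a part appends a factor. *)
lemma rhs_term_comp_cons:
  assumes "1 \<le> l" and D: "\<tau> \<in> Delta t" and "1 \<le> t"
  shows "rhs_term p \<eta> s (comp_cons l \<tau>) (J(Suc (rho \<tau>) := Suc k)) x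
       = mmul (p (s + l)) (rhs_term p \<eta> (s + l) \<tau> J x) (last_factor p \<eta> k s l x)"
proof -
  let ?\<rho> = "rho \<tau>"
  define \<tau>' where "\<tau>' = comp_cons l \<tau>"
  define J' where "J' = J(Suc ?\<rho> := Suc k)"
  have rho': "rho \<tau>' = Suc ?\<rho>"
    unfolding \<tau>'_def by (rule rho_comp_cons[OF assms])
  have "1 \<le> ?\<rho>"
    by (rule rho_pos[OF D \<open>1 \<le> t\<close>])
  have \<sigma>: "sigma \<tau>' r = l + sigma \<tau> r" "sigma' \<tau>' r = l + sigma' \<tau> r" if "r \<le> ?\<rho>" for r
    using sigma_comp_cons[OF _ that] sigma'_comp_cons[OF _ that] rho' by (simp_all add: \<tau>'_def)
  let ?d = "\<lambda>r. p (s + sigma \<tau>' r)"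
  let ?F = "factor p \<eta> s \<tau>' J' x"
  have "rhs_term p \<eta> s \<tau>' J' x = mmul (?d ?\<rho>) (mchain ?d ?F ?\<rho>) (?F (Suc ?\<rho>))"
    unfolding rhs_term_def rho' by (rule mchain_Suc[OF \<open>1 \<le> ?\<rho>\<close>])
  also have "?d ?\<rho> = p (s + l)"
    using \<sigma>(1)[of ?\<rho>] by (simp add: sigma_def)
  also have "mchain ?d ?F ?\<rho> = rhs_term p \<eta> (s + l) \<tau> J x"
    unfolding rhs_term_def
  proof (rule mchain_cong[OF \<open>1 \<le> ?\<rho>\<close>])
    fix r assume r: "1 \<le> r" "r \<le> ?\<rho>"
    then have "\<tau>' (rho \<tau>' + 1 - r) = \<tau> (rho \<tau> + 1 - r)"
      using comp_cons_rev_index rho' by (simp add: \<tau>'_def)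
    with r show "?F r = factor p \<eta> (s + l) \<tau> J x r"
      unfolding factor_def \<sigma>[OF r(2)] by (simp add: J'_def add.assoc)
  next
    fix r assume "1 \<le> r" "r < ?\<rho>"
    then show "?d r = p (s + l + sigma \<tau> r)"
      using \<sigma>(1)[of r] by (simp add: add.assoc)
  qed
  also have "?F (Suc ?\<rho>) = last_factor p \<eta> k s l x"
    using sigma_comp_cons_last[of l \<tau>] sigma'_comp_cons_last[of l \<tau>] rho'
    by (simp add: factor_def last_factor_def J'_def \<tau>'_def comp_cons_def)
  finally show ?thesis
    unfolding \<tau>'_def J'_def .
qed

lemma rhs_sum_0: "1 \<le> t \<Longrightarrow> rhs_sum p \<eta> 0 s t x = (\<lambda>i j K. 0)"
  unfolding rhs_sum_def using rho_pos by (auto simp: Jset_0_empty intro!: ext sum.neutral)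

lemma rhs_sum_Suc:
  assumes "1 \<le> t"
  shows "rhs_sum p \<eta> (Suc k) s t x =
    madd (madd (rhs_sum p \<eta> k s t x) (last_factor p \<eta> k s t x))
      (\<lambda>i j K. \<Sum>l\<in>{1..<t}.
         mmul (p (s + l)) (rhs_sum p \<eta> k (s + l) (t - l) x) (last_factor p \<eta> k s l x) i j K)"
proof (intro ext)
  fix i j K
  let ?c = "\<lambda>s \<tau> J. rhs_term p \<eta> s \<tau> J x i j K"
  let ?new = "\<lambda>\<tau>. \<Sum>J\<in>Jset k (rho \<tau> - 1). ?c s \<tau> (J(rho \<tau> := Suc k))"
  have new_comp_cons: "(\<Sum>\<tau>\<in>Delta (t - l). ?new (comp_cons l \<tau>)) =
      mmul (p (s + l)) (rhs_sum p \<eta> k (s + l) (t - l) x) (last_factor p \<eta> k s l x) i j K"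
    if l: "1 \<le> l" "l < t" for l
  proof -
    have "?new (comp_cons l \<tau>) = (\<Sum>J\<in>Jset k (rho \<tau>).
        mmul (p (s + l)) (rhs_term p \<eta> (s + l) \<tau> J x) (last_factor p \<eta> k s l x) i j K)"
      if "\<tau> \<in> Delta (t - l)" for \<tau>
      using rho_comp_cons[OF l(1) that] rhs_term_comp_cons[OF l(1) that, of p \<eta> s _ k x] l(2)
      by simp
    then show ?thesis
      unfolding rhs_sum_def by (simp add: mmul_sum_left)
  qed
  have "rhs_sum p \<eta> (Suc k) s t x i j K =
      (\<Sum>\<tau>\<in>Delta t. (\<Sum>J\<in>Jset k (rho \<tau>). ?c s \<tau> J) + ?new \<tau>)"
    unfolding rhs_sum_def using rho_pos[OF _ assms] by (simp add: sum_Jset_Suc)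
  also have "\<dots> = rhs_sum p \<eta> k s t x i j K + (\<Sum>\<tau>\<in>Delta t. ?new \<tau>)"
    unfolding rhs_sum_def by (simp add: sum.distrib)
  also have "(\<Sum>\<tau>\<in>Delta t. ?new \<tau>) =
      ?new (comp_single t) + (\<Sum>l\<in>{1..<t}. \<Sum>\<tau>\<in>Delta (t - l). ?new (comp_cons l \<tau>))"
    by (rule sum_Delta[OF assms])
  also have "?new (comp_single t) = last_factor p \<eta> k s t x i j K"
    using rhs_term_comp_single[OF assms, of p \<eta> s k x] by (simp add: rho_comp_single[OF assms] Jset_0)
  also have "(\<Sum>l\<in>{1..<t}. \<Sum>\<tau>\<in>Delta (t - l). ?new (comp_cons l \<tau>)) =
      (\<Sum>l\<in>{1..<t}. mmul (p (s + l)) (rhs_sum p \<eta> k (s + l) (t - l) x) (last_factor p \<eta> k s l x) i j K)"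
    using new_comp_cons by (intro sum.cong) auto
  finally show "rhs_sum p \<eta> (Suc k) s t x i j K = madd (madd (rhs_sum p \<eta> k s t x) (last_factor p \<eta> k s t x))
      (\<lambda>i j K. \<Sum>l\<in>{1..<t}.
         mmul (p (s + l)) (rhs_sum p \<eta> k (s + l) (t - l) x) (last_factor p \<eta> k s l x) i j K) i j K"
    by (simp add: madd_apply add.assoc)
qed

section \<open>The induction on \<open>k\<close>\<close>

definition eta_prod :: "(nat \<Rightarrow> nat) \<Rightarrow> (nat \<Rightarrow> ('x, 'n::{finite,linorder}) fam)
    \<Rightarrow> nat \<Rightarrow> ('x, 'n) fam" where
  "eta_prod p \<eta> k = (if k = 0 then (\<lambda>s t x i j K. 0) else etaK p \<eta> k)"

lemma eta_prod_Suc: "eta_prod p \<eta> (Suc k) = fwedge p (eta_prod p \<eta> k) (\<eta> (Suc k))"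
proof (cases k)
  case 0
  have "fwedge p (\<lambda>s t x i j K. 0) (\<eta> 1) = \<eta> 1"
    unfolding fwedge_def by (intro ext) simp
  with 0 show ?thesis
    by (simp add: eta_prod_def etaK_def)
next
  case (Suc k')
  then have "[2..<Suc (Suc k)] = [2..<Suc k] @ [Suc k]"
    by simp
  with Suc show ?thesis
    by (simp add: eta_prod_def etaK_def)
qed

lemma gs_eq_idm_add_eta_prod:
  assumes "i < p s" "j < p s"
  shows "gs p \<eta> s k x i j = madd (idm (p s)) (eta_prod p \<eta> k s 0 x) i j"
  using assms(2)
proof (induction k arbitrary: j)
  case 0
  then show ?case
    by (simp add: gs_0 eta_prod_def madd_def)
next
  case (Suc k)
  let ?E = "eta_prod p \<eta> k s 0 x" and ?N = "\<eta> (Suc k) s 0 x"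
  have "gs p \<eta> s (Suc k) x i j = mmul (p s) (madd (idm (p s)) ?E) (madd (idm (p s)) ?N) i j"
    unfolding gs_Suc gsj_Suc using Suc.IH by (intro mmul_cong_row) simp
  also have "\<dots> = madd (idm (p s)) (eta_prod p \<eta> (Suc k) s 0 x) i j"
    using assms(1) \<open>j < p s\<close>
    by (intro ext) (simp add: mmul_madd_left mmul_madd_right mmul_idm_left mmul_idm_right
        madd_apply eta_prod_Suc fwedge_def)
  finally show ?case .
qed

lemma last_factor_mmul_gs:
  assumes "mmul (p s) (minv (p s) (gs p \<eta> s (Suc k) x)) (gs p \<eta> s (Suc k) x) = idm (p s)"
    and "j < p s"
  shows "mmul (p s) (last_factor p \<eta> k s l x) (gs p \<eta> s (Suc k) x) i j =
    mmul (p (s + l)) (gs p \<eta> (s + l) k x) (\<eta> (Suc k) s l x) i j"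
proof -
  have "mmul (p s) (last_factor p \<eta> k s l x) (gs p \<eta> s (Suc k) x) =
      mmul (p (s + l)) (gs p \<eta> (s + l) k x) (mmul (p s) (\<eta> (Suc k) s l x) (idm (p s)))"
    unfolding last_factor_def mmul_assoc assms(1) ..
  moreover have "mmul (p (s + l)) (gs p \<eta> (s + l) k x) (mmul (p s) (\<eta> (Suc k) s l x) (idm (p s))) i j =
      mmul (p (s + l)) (gs p \<eta> (s + l) k x) (\<eta> (Suc k) s l x) i j"
    using assms(2) by (intro mmul_cong_col) (simp add: mmul_idm_right)
  ultimately show ?thesis
    by simp
qed

lemma mmul_mmul_last_factor_gs:
  assumes "mmul (p s) (minv (p s) (gs p \<eta> s (Suc k) x)) (gs p \<eta> s (Suc k) x) = idm (p s)"
    and "j < p s"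
  shows "mmul (p s) (mmul (p (s + l)) A (last_factor p \<eta> k s l x)) (gs p \<eta> s (Suc k) x) i j =
    mmul (p (s + l)) (mmul (p (s + l)) A (gs p \<eta> (s + l) k x)) (\<eta> (Suc k) s l x) i j"
proof -
  have "mmul (p s) (mmul (p (s + l)) A (last_factor p \<eta> k s l x)) (gs p \<eta> s (Suc k) x) i j =
      mmul (p (s + l)) A (mmul (p (s + l)) (gs p \<eta> (s + l) k x) (\<eta> (Suc k) s l x)) i j"
    unfolding mmul_assoc using last_factor_mmul_gs[OF assms] by (intro mmul_cong_col) simp
  then show ?thesis
    by (simp only: mmul_assoc)
qed

lemma sum_atMost_split_ends:
  assumes "1 \<le> (t::nat)"
  shows "(\<Sum>l\<le>t. f l) = f 0 + f t + (\<Sum>l\<in>{1..<t}. f l)"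
proof -
  have "{..t} = insert 0 (insert t {1..<t})"
    using assms by auto
  then show ?thesis
    using assms by (simp add: add.assoc)
qed

lemma eta_prod_Suc_eq_rhs:
  assumes inv: "\<And>s. mmul (p s) (minv (p s) (gs p \<eta> s (Suc k) x)) (gs p \<eta> s (Suc k) x) = idm (p s)"
    and IH: "\<And>s t i j. 1 \<le> t \<Longrightarrow> i < p (s + t) \<Longrightarrow> j < p s \<Longrightarrow>
      eta_prod p \<eta> k s t x i j = rhs p \<eta> k s t x i j"
    and t: "1 \<le> t" and i: "i < p (s + t)" and j: "j < p s"
  shows "eta_prod p \<eta> (Suc k) s t x i j = rhs p \<eta> (Suc k) s t x i j"
proof
  fix K
  let ?E = "eta_prod p \<eta> k" and ?N = "\<eta> (Suc k) s" and ?G' = "gs p \<eta> s (Suc k) x"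
  let ?S = "\<lambda>l. rhs_sum p \<eta> k (s + l) (t - l) x"
  let ?f = "\<lambda>l. mmul (p (s + l)) (?E (s + l) (t - l) x) (?N l x) i j K"
  have first: "mmul (p s) (rhs_sum p \<eta> k s t x) ?G' i j =
      mmul (p s) (?E s t x) (madd (idm (p s)) (?N 0 x)) i j"
    unfolding gs_Suc gsj_Suc mmul_assoc[symmetric]
    using IH[OF t i, unfolded rhs_eq] by (intro mmul_cong_row) simp
  have last: "mmul (p s) (last_factor p \<eta> k s t x) ?G' i j =
      mmul (p (s + t)) (madd (idm (p (s + t))) (?E (s + t) 0 x)) (?N t x) i j"
    unfolding last_factor_mmul_gs[OF inv j]
    using i by (intro mmul_cong_row gs_eq_idm_add_eta_prod) simp_all
  have middle: "mmul (p s) (mmul (p (s + l)) (?S l) (last_factor p \<eta> k s l x)) ?G' i j =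
      mmul (p (s + l)) (?E (s + l) (t - l) x) (?N l x) i j" if "l \<in> {1..<t}" for l
  proof -
    have "1 \<le> t - l" "i < p (s + l + (t - l))"
      using that i by auto
    then show ?thesis
      unfolding mmul_mmul_last_factor_gs[OF inv j]
      using IH[unfolded rhs_eq] by (intro mmul_cong_row) simp
  qed
  have "rhs p \<eta> (Suc k) s t x i j K =
      mmul (p s) (rhs_sum p \<eta> k s t x) ?G' i j K + mmul (p s) (last_factor p \<eta> k s t x) ?G' i j K
      + (\<Sum>l\<in>{1..<t}. mmul (p s) (mmul (p (s + l)) (?S l) (last_factor p \<eta> k s l x)) ?G' i j K)"
    unfolding rhs_eq rhs_sum_Suc[OF t] by (simp add: mmul_madd_left mmul_sum_left)
  also have "\<dots> = ?E s t x i j K + ?f 0 + (?N t x i j K + ?f t) + (\<Sum>l\<in>{1..<t}. ?f l)"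
    using first last middle i j
    by (simp add: mmul_madd_left mmul_madd_right mmul_idm_left mmul_idm_right madd_apply)
  also have "\<dots> = eta_prod p \<eta> (Suc k) s t x i j K"
    by (simp add: eta_prod_Suc fwedge_def sum_atMost_split_ends[OF t] algebra_simps)
  finally show "eta_prod p \<eta> (Suc k) s t x i j K = rhs p \<eta> (Suc k) s t x i j K" ..
qed

lemma eta_prod_eq_rhs:
  assumes "\<And>s k. mmul (p s) (minv (p s) (gs p \<eta> s k x)) (gs p \<eta> s k x) = idm (p s)"
  shows "1 \<le> t \<Longrightarrow> i < p (s + t) \<Longrightarrow> j < p s \<Longrightarrow>
    eta_prod p \<eta> k s t x i j = rhs p \<eta> k s t x i j"
proof (induction k arbitrary: s t i j)
  case 0
  then show ?case
    by (auto simp: eta_prod_def rhs_eq rhs_sum_0)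
next
  case (Suc k)
  then show ?case
    using eta_prod_Suc_eq_rhs[OF assms] by blast
qed

theorem mainTheorem8:
  fixes m :: nat and p :: "nat \<Rightarrow> nat" and U :: "((complex, 'n::{finite,linorder}) vec) set"
    and \<eta> :: "nat \<Rightarrow> ((complex, 'n) vec, 'n) fam"
  assumes "open U"
    and "\<And>j. j \<ge> 1 \<Longrightarrow> inP m p U (\<eta> j)"
    and "k \<ge> 1" and "t \<ge> 1"
    and "x \<in> U" and "a < p (s + t)" and "b < p s"
  shows "etaK p \<eta> k s t x a b = rhs p \<eta> k s t x a b"
proof -
  have "minvertible (p s') (gs p \<eta> s' k' x)" for s' k'
    using assms(2,5) by (rule gs_minvertible)
  then have "mmul (p s') (minv (p s') (gs p \<eta> s' k' x)) (gs p \<eta> s' k' x) = idm (p s')" for s' k'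
    by (rule mmul_minv_left)
  then have "eta_prod p \<eta> k s t x a b = rhs p \<eta> k s t x a b"
    using assms(4,6,7) by (rule eta_prod_eq_rhs)
  moreover have "eta_prod p \<eta> k = etaK p \<eta> k"
    using assms(3) by (simp add: eta_prod_def)
  ultimately show ?thesis
    by simp
qed

end
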